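(* Let $G$ be a locally compact abelian group, $X$ a locally convex topological vector space over $\mathbf{C}$, $n\in\mathbf{Z}_+$, and $H$ a closed subgroup of $G$ such that $G/H$ is a torsion group. Then: (a) the restriction map $r:P^n(G,X)\to P^n(H,X)$, $p\mapsto p|_H$, is one-to-one, so $\dim P^n(G,X)\le\dim P^n(H,X)$; (b) if moreover $G/H$ is of bounded order and $P^n(H)$ is finite dimensional, then $r:P^n(G,X)\to P^n(H,X)$ is a linear isomorphism.
   Context: $\mathbf{Z}_+=\{0,1,2,\dots\}$. A group is torsion if every element has finite order, and of bounded order if the orders of its elements are bounded. For an abelian topological group $S$, a continuous $p:S\to X$ is a polynomial of degree at most $n$ if for all $s,t\in S$ the map $m\mapsto p(s+mt)$, $m\in\mathbf{Z}_+$, is a polynomial in $m$ of degree at most $n$ with coefficients in $X$; $P^n(S,X)$ is the space of these and $P^n(S)=P^n(S,\mathbf{C})$. *)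

theory Defs
  imports "HOL-Analysis.Analysis"
begin

class complex_vector = real_vector +
  fixes scaleC :: "complex \<Rightarrow> 'a \<Rightarrow> 'a" (infixr "*\<^sub>C" 75)
  assumes scaleC_add_right: "a *\<^sub>C (x + y) = a *\<^sub>C x + a *\<^sub>C y"
    and scaleC_add_left: "(a + b) *\<^sub>C x = a *\<^sub>C x + b *\<^sub>C x"
    and scaleC_scaleC: "a *\<^sub>C (b *\<^sub>C x) = (a * b) *\<^sub>C x"
    and scaleC_one: "1 *\<^sub>C x = x"
    and scaleR_scaleC: "r *\<^sub>R x = complex_of_real r *\<^sub>C x"

instantiation complex :: complex_vector
begin
definition scaleC_complex :: "complex \<Rightarrow> complex \<Rightarrow> complex" where
  "scaleC_complex a x = a * x"
instance by standard (auto simp: scaleC_complex_def algebra_simps scaleR_conv_of_real)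
end

definition nmul :: "nat \<Rightarrow> 'g::ab_group_add \<Rightarrow> 'g" where
  "nmul m t = (\<Sum>i<m. t)"

text \<open>Topological abelian group, locally compact (and Hausdorff via the t2_space class).\<close>
definition topological_ab_group :: "'g::{topological_space, ab_group_add} itself \<Rightarrow> bool" where
  "topological_ab_group _ \<longleftrightarrow>
     continuous_on UNIV (\<lambda>(x::'g, y::'g). x + y) \<and> continuous_on UNIV (\<lambda>x::'g. - x)"

definition locally_compact_space_type :: "'g::topological_space itself \<Rightarrow> bool" where
  "locally_compact_space_type _ \<longleftrightarrow>
     (\<forall>x::'g. \<exists>U K. open U \<and> compact K \<and> x \<in> U \<and> U \<subseteq> K)"

definition locally_convex_tvs :: "'x::{topological_space, complex_vector} itself \<Rightarrow> bool" where
  "locally_convex_tvs _ \<longleftrightarrow>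
     continuous_on UNIV (\<lambda>(x::'x, y::'x). x + y) \<and>
     continuous_on UNIV (\<lambda>(c::complex, x::'x). c *\<^sub>C x) \<and>
     (\<forall>U. open U \<and> (0::'x) \<in> U \<longrightarrow> (\<exists>V. open V \<and> convex V \<and> 0 \<in> V \<and> V \<subseteq> U))"

definition closed_subgroup :: "'g::{topological_space, ab_group_add} set \<Rightarrow> bool" where
  "closed_subgroup H \<longleftrightarrow> closed H \<and> 0 \<in> H \<and> (\<forall>x\<in>H. \<forall>y\<in>H. x + y \<in> H) \<and> (\<forall>x\<in>H. - x \<in> H)"

definition quotient_torsion :: "'g::ab_group_add set \<Rightarrow> bool" where
  "quotient_torsion H \<longleftrightarrow> (\<forall>g. \<exists>k>0. nmul k g \<in> H)"

definition quotient_bounded_order :: "'g::ab_group_add set \<Rightarrow> bool" where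
  "quotient_bounded_order H \<longleftrightarrow> (\<exists>B. \<forall>g. \<exists>k>0. k \<le> B \<and> nmul k g \<in> H)"

text \<open>P^n(S,X) for a subgroup S (with the subspace topology); functions are
  represented extensionally, i.e. as functions on the ambient type vanishing off S.\<close>
definition Pn :: "nat \<Rightarrow> 'g::{topological_space, ab_group_add} set
                   \<Rightarrow> ('g \<Rightarrow> 'x::{topological_space, complex_vector}) set" where
  "Pn n S = {p. continuous_on S p \<and> (\<forall>x. x \<notin> S \<longrightarrow> p x = 0) \<and>
     (\<forall>s\<in>S. \<forall>t\<in>S. \<exists>c::nat \<Rightarrow> 'x. \<forall>m::nat.
        p (s + nmul m t) = (\<Sum>k\<le>n. (of_nat m) ^ k *\<^sub>C c k))}"

definition restr :: "'g set \<Rightarrow> ('g \<Rightarrow> 'x::zero) \<Rightarrow> ('g \<Rightarrow> 'x)" where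
  "restr H p = (\<lambda>x. if x \<in> H then p x else 0)"

definition fin_dim_C :: "('g \<Rightarrow> complex) set \<Rightarrow> bool" where
  "fin_dim_C V \<longleftrightarrow> (\<exists>k (f :: nat \<Rightarrow> 'g \<Rightarrow> complex). (\<forall>i<k. f i \<in> V) \<and>
     (\<forall>p\<in>V. \<exists>a :: nat \<Rightarrow> complex. p = (\<lambda>x. \<Sum>i<k. a i * f i x)))"

end

theory Submission
  imports Defs "HOL-Computational_Algebra.Polynomial"
begin

text \<open>Along every ray \<open>m \<mapsto> s + m t\<close> a polynomial of degree at most \<open>n\<close> is a polynomial in \<open>m\<close>,
  so by Lagrange interpolation its value at \<open>g\<close> is a fixed linear combination of its values
  at \<open>0, k g, \<dots>, n k g\<close>, for any \<open>k > 0\<close>. If \<open>G/H\<close> is torsion, \<open>k\<close> can be chosen with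
  \<open>k g \<in> H\<close>, so \<open>p|\<^sub>H\<close> determines \<open>p\<close>. If \<open>G/H\<close> has bounded order, a single \<open>N\<close> works for all
  \<open>g\<close>, and the same linear combination of the values \<open>q (j N g)\<close> extends any \<open>q \<in> P\<^sup>n(H,X)\<close>
  to \<open>G\<close>: it is continuous, and polynomial along rays because \<open>q\<close> is polynomial along the rays
  \<open>m \<mapsto> j N s + m N t\<close> of \<open>H\<close>.\<close>

lemma scaleC_zero_right [simp]: "a *\<^sub>C (0::'x::complex_vector) = 0"
  by (metis add_cancel_right_right scaleC_add_right)

lemma scaleC_zero_left [simp]: "(0::complex) *\<^sub>C (x::'x::complex_vector) = 0"
  by (metis add_cancel_right_right scaleC_add_left)

lemma scaleC_sum_right: "a *\<^sub>C sum f A = (\<Sum>i\<in>A. a *\<^sub>C (f i :: 'x::complex_vector))"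
  by (induction A rule: infinite_finite_induct) (simp_all add: scaleC_add_right)

lemma scaleC_sum_left: "sum f A *\<^sub>C (x::'x::complex_vector) = (\<Sum>i\<in>A. f i *\<^sub>C x)"
  by (induction A rule: infinite_finite_induct) (simp_all add: scaleC_add_left)

subsection \<open>Lagrange interpolation with vector coefficients\<close>

definition cpoly :: "nat \<Rightarrow> (nat \<Rightarrow> 'x::complex_vector) \<Rightarrow> complex \<Rightarrow> 'x" where
  "cpoly n c z = (\<Sum>k\<le>n. z ^ k *\<^sub>C c k)"

definition lagrange_basis :: "nat \<Rightarrow> (nat \<Rightarrow> 'a::field) \<Rightarrow> 'a \<Rightarrow> nat \<Rightarrow> 'a" where
  "lagrange_basis n a x j = (\<Prod>i\<in>{..n}-{j}. (x - a i) / (a j - a i))"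

lemma lagrange_basis_node:
  assumes "inj_on a {..n}" "j \<le> n" "l \<le> n"
  shows "lagrange_basis n a (a l) j = (if j = l then 1 else 0)"
proof (cases "j = l")
  case True
  with assms have "\<forall>i\<in>{..n}-{j}. (a l - a i) / (a j - a i) = 1"
    by (auto simp: inj_on_def)
  with True show ?thesis by (simp add: lagrange_basis_def)
next
  case False
  with assms show ?thesis by (auto simp: lagrange_basis_def intro!: bexI[of _ l])
qed

definition lagrange_basis_poly :: "nat \<Rightarrow> (nat \<Rightarrow> 'a::field) \<Rightarrow> nat \<Rightarrow> 'a poly" where
  "lagrange_basis_poly n a j = (\<Prod>i\<in>{..n}-{j}. smult (1 / (a j - a i)) [:- a i, 1:])"

lemma poly_lagrange_basis_poly: "poly (lagrange_basis_poly n a j) x = lagrange_basis n a x j"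
  unfolding lagrange_basis_poly_def lagrange_basis_def poly_prod
  by (intro prod.cong) (auto simp: diff_divide_distrib)

lemma degree_lagrange_basis_poly:
  assumes "j \<le> n"
  shows "degree (lagrange_basis_poly n a j) \<le> n"
proof -
  let ?f = "\<lambda>i. smult (1 / (a j - a i)) [:- a i, 1:]"
  have "degree (lagrange_basis_poly n a j) \<le> sum (degree \<circ> ?f) ({..n}-{j})"
    unfolding lagrange_basis_poly_def by (rule degree_prod_sum_le) simp
  also have "\<dots> \<le> card ({..n}-{j}) * 1"
    using sum_bounded_above[of "{..n}-{j}" "degree \<circ> ?f" 1]
    by (auto intro: order.trans[OF degree_smult_le])
  also have "\<dots> = n" using assms by simp
  finally show ?thesis .
qed

lemma lagrange_interpolation_power:
  fixes a :: "nat \<Rightarrow> 'a::field"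
  assumes inj: "inj_on a {..n}" and "k \<le> n"
  shows "x ^ k = (\<Sum>j\<le>n. lagrange_basis n a x j * a j ^ k)"
proof -
  define Q where "Q = (\<Sum>j\<le>n. smult (a j ^ k) (lagrange_basis_poly n a j))"
  have poly_Q: "poly Q y = (\<Sum>j\<le>n. lagrange_basis n a y j * a j ^ k)" for y
    unfolding Q_def poly_sum by (simp add: poly_lagrange_basis_poly mult.commute)
  have "Q = monom 1 k"
  proof (rule poly_eqI_degree[of "a ` {..n}"])
    fix y assume "y \<in> a ` {..n}"
    then obtain l where l: "l \<le> n" "y = a l" by auto
    have "poly Q y = (\<Sum>j\<le>n. if j = l then a j ^ k else 0)"
      unfolding poly_Q l(2) using lagrange_basis_node[OF inj _ l(1)] by (intro sum.cong) auto
    with l show "poly Q y = poly (monom 1 k) y" by (simp add: poly_monom)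
  next
    have "degree Q \<le> n" unfolding Q_def
      by (intro degree_sum_le) (auto intro: order.trans[OF degree_smult_le] degree_lagrange_basis_poly)
    then show "degree Q < card (a ` {..n})" using card_image[OF inj] by simp
    show "degree (monom (1::'a) k) < card (a ` {..n})"
      using card_image[OF inj] assms(2) degree_monom_le[of "1::'a" k] by simp
  qed
  then show ?thesis using poly_Q[of x] by (simp add: poly_monom)
qed

lemma lagrange_interpolation_cpoly:
  assumes "inj_on a {..n}"
  shows "cpoly n c x = (\<Sum>j\<le>n. lagrange_basis n a x j *\<^sub>C cpoly n c (a j))"
proof -
  have "(\<Sum>j\<le>n. lagrange_basis n a x j *\<^sub>C cpoly n c (a j))
      = (\<Sum>j\<le>n. \<Sum>k\<le>n. (lagrange_basis n a x j * a j ^ k) *\<^sub>C c k)"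
    unfolding cpoly_def by (simp add: scaleC_sum_right scaleC_scaleC)
  also have "\<dots> = (\<Sum>k\<le>n. \<Sum>j\<le>n. (lagrange_basis n a x j * a j ^ k) *\<^sub>C c k)"
    by (rule sum.swap)
  also have "\<dots> = cpoly n c x"
    unfolding cpoly_def using lagrange_interpolation_power[OF assms]
    by (simp add: scaleC_sum_left[symmetric])
  finally show ?thesis by simp
qed

lemma cpoly_mult_arg: "cpoly n c (z * w) = cpoly n (\<lambda>k. z ^ k *\<^sub>C c k) w"
  by (simp add: cpoly_def scaleC_scaleC power_mult_distrib mult.commute)

lemma sum_scaleC_cpoly:
  "(\<Sum>j\<in>A. w j *\<^sub>C cpoly n (c j) z) = cpoly n (\<lambda>k. \<Sum>j\<in>A. w j *\<^sub>C c j k) z"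
proof -
  have "(\<Sum>j\<in>A. w j *\<^sub>C cpoly n (c j) z) = (\<Sum>j\<in>A. \<Sum>k\<le>n. z ^ k *\<^sub>C w j *\<^sub>C c j k)"
    unfolding cpoly_def by (simp add: scaleC_sum_right scaleC_scaleC mult.commute)
  also have "\<dots> = (\<Sum>k\<le>n. \<Sum>j\<in>A. z ^ k *\<^sub>C w j *\<^sub>C c j k)"
    by (rule sum.swap)
  finally show ?thesis
    unfolding cpoly_def by (simp add: scaleC_sum_right)
qed

lemma nmul_0 [simp]: "nmul 0 t = 0"
  by (simp add: nmul_def)

lemma nmul_Suc: "nmul (Suc m) t = nmul m t + t"
  by (simp add: nmul_def)

lemma nmul_1 [simp]: "nmul (Suc 0) t = t"
  by (simp add: nmul_def)

lemma nmul_add_left: "nmul (a + b) t = nmul a t + nmul b t"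
  by (induction b) (simp_all add: nmul_Suc add.assoc)

lemma nmul_add_right: "nmul m (s + t) = nmul m s + nmul m t"
  by (induction m) (simp_all add: nmul_Suc algebra_simps)

lemma nmul_mult: "nmul (a * b) t = nmul a (nmul b t)"
  by (induction a) (simp_all add: nmul_Suc nmul_add_left add.commute)

lemma nmul_in_closed_subgroup: "closed_subgroup H \<Longrightarrow> h \<in> H \<Longrightarrow> nmul m h \<in> H"
  by (induction m) (auto simp: nmul_Suc closed_subgroup_def)

lemma quotient_bounded_order_common_multiple:
  assumes H: "closed_subgroup H" and "quotient_bounded_order H"
  obtains N where "N > 0" "\<And>g. nmul N g \<in> H"
proof -
  obtain B where B: "\<And>g. \<exists>k>0. k \<le> B \<and> nmul k g \<in> H"
    using assms(2) unfolding quotient_bounded_order_def by blast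
  show ?thesis
  proof
    show "fact B > (0::nat)" by simp
    fix g
    obtain k where k: "k > 0" "k \<le> B" "nmul k g \<in> H" using B by blast
    then have "k dvd fact B" by (simp add: dvd_fact)
    then obtain r where "fact B = r * k" by (metis dvd_def mult.commute)
    then show "nmul (fact B) g \<in> H" using nmul_in_closed_subgroup[OF H k(3)] by (simp add: nmul_mult)
  qed
qed

lemma continuous_on_nmul:
  assumes "topological_ab_group TYPE('g::{topological_space, ab_group_add})"
  shows "continuous_on UNIV (nmul m :: 'g \<Rightarrow> 'g)"
proof (induction m)
  case 0 then show ?case by (simp add: nmul_def)
next
  case (Suc m)
  have "continuous_on UNIV (\<lambda>(x::'g, y::'g). x + y)"
    using assms by (simp add: topological_ab_group_def)
  then have "continuous_on UNIV (\<lambda>t. (\<lambda>(x::'g, y::'g). x + y) (nmul m t, t))"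
    by (rule continuous_on_compose2) (auto intro: continuous_on_Pair Suc)
  then show ?case by (simp add: nmul_Suc[abs_def])
qed

lemma continuous_on_add_tvs:
  assumes "locally_convex_tvs TYPE('x::{topological_space, complex_vector})"
    and "continuous_on S f" "continuous_on S g"
  shows "continuous_on S (\<lambda>y. f y + g y :: 'x)"
proof -
  have "continuous_on UNIV (\<lambda>(x::'x, y::'x). x + y)"
    using assms by (simp add: locally_convex_tvs_def)
  then have "continuous_on S (\<lambda>y. (\<lambda>(x::'x, y::'x). x + y) (f y, g y))"
    by (rule continuous_on_compose2) (auto intro: continuous_on_Pair assms)
  then show ?thesis by simp
qed

lemma continuous_on_scaleC_tvs:
  assumes "locally_convex_tvs TYPE('x::{topological_space, complex_vector})"
    and "continuous_on S f"
  shows "continuous_on S (\<lambda>y. w *\<^sub>C (f y :: 'x))"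
proof -
  have "continuous_on UNIV (\<lambda>(c::complex, x::'x). c *\<^sub>C x)"
    using assms by (simp add: locally_convex_tvs_def)
  then have "continuous_on S (\<lambda>y. (\<lambda>(c::complex, x::'x). c *\<^sub>C x) (w, f y))"
    by (rule continuous_on_compose2) (auto intro: continuous_on_Pair assms)
  then show ?thesis by simp
qed

lemma continuous_on_sum_tvs:
  assumes "locally_convex_tvs TYPE('x::{topological_space, complex_vector})"
    and "finite A" "\<And>j. j \<in> A \<Longrightarrow> continuous_on S (f j)"
  shows "continuous_on S (\<lambda>y. \<Sum>j\<in>A. (f j y :: 'x))"
  using assms(2,3)
  by (induction A rule: finite_induct) (simp_all add: continuous_on_add_tvs[OF assms(1)])

subsection \<open>Restriction and extension of polynomials\<close>

lemma Pn_cpoly_on_ray: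
  assumes "p \<in> Pn n S" "s \<in> S" "t \<in> S"
  obtains c where "\<And>m. p (s + nmul m t) = cpoly n c (of_nat m)"
  using assms unfolding Pn_def cpoly_def by blast

lemma Pn_eq_interpolation_multiples:
  assumes p: "p \<in> Pn n S" and "0 \<in> S" "g \<in> S" "k > 0"
  shows "p g = (\<Sum>j\<le>n. lagrange_basis n (\<lambda>j. of_nat (k * j)) 1 j *\<^sub>C p (nmul (k * j) g))"
proof -
  obtain c where c: "\<And>m. p (0 + nmul m g) = cpoly n c (of_nat m)"
    using Pn_cpoly_on_ray[OF p assms(2,3)] by blast
  have nodes: "inj_on (\<lambda>j. of_nat (k * j) :: complex) {..n}"
    using \<open>k > 0\<close> by (auto simp: inj_on_def)
  have "p g = cpoly n c 1" using c[of 1] by simp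
  also have "\<dots> = (\<Sum>j\<le>n. lagrange_basis n (\<lambda>j. of_nat (k * j)) 1 j *\<^sub>C cpoly n c (of_nat (k * j)))"
    by (rule lagrange_interpolation_cpoly[OF nodes])
  also have "\<dots> = (\<Sum>j\<le>n. lagrange_basis n (\<lambda>j. of_nat (k * j)) 1 j *\<^sub>C p (nmul (k * j) g))"
    using c by simp
  finally show ?thesis .
qed

lemma inj_on_restr_Pn:
  assumes H: "closed_subgroup H" and "quotient_torsion H"
  shows "inj_on (restr H) (Pn n UNIV :: ('g::{topological_space,ab_group_add} \<Rightarrow> 'x::{topological_space,complex_vector}) set)"
proof (rule inj_onI)
  fix p q :: "'g \<Rightarrow> 'x"
  assume p: "p \<in> Pn n UNIV" and q: "q \<in> Pn n UNIV" and eq: "restr H p = restr H q"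
  show "p = q"
  proof
    fix g
    obtain k where k: "k > 0" "nmul k g \<in> H"
      using assms(2) unfolding quotient_torsion_def by blast
    have "nmul (k * j) g \<in> H" for j
      using nmul_in_closed_subgroup[OF H k(2), of j] by (simp add: nmul_mult mult.commute)
    then have pq: "p (nmul (k * j) g) = q (nmul (k * j) g)" for j
      using fun_cong[OF eq, of "nmul (k * j) g"] unfolding restr_def by simp
    have "p g = (\<Sum>j\<le>n. lagrange_basis n (\<lambda>j. of_nat (k * j)) 1 j *\<^sub>C p (nmul (k * j) g))"
      by (rule Pn_eq_interpolation_multiples[OF p UNIV_I UNIV_I k(1)])
    also have "\<dots> = (\<Sum>j\<le>n. lagrange_basis n (\<lambda>j. of_nat (k * j)) 1 j *\<^sub>C q (nmul (k * j) g))"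
      by (simp only: pq)
    also have "\<dots> = q g"
      by (rule Pn_eq_interpolation_multiples[OF q UNIV_I UNIV_I k(1), symmetric])
    finally show "p g = q g" .
  qed
qed

lemma restr_Pn_UNIV:
  assumes H: "closed_subgroup H" and p: "p \<in> Pn n UNIV"
  shows "restr H p \<in> Pn n H"
proof -
  have "continuous_on H (restr H p)"
    using continuous_on_subset[of UNIV p H] p
    by (auto simp: Pn_def restr_def intro: continuous_on_eq)
  moreover have "\<exists>c. \<forall>m. restr H p (s + nmul m t) = (\<Sum>k\<le>n. of_nat m ^ k *\<^sub>C c k)"
    if "s \<in> H" "t \<in> H" for s t
  proof -
    obtain c where c: "\<And>m. p (s + nmul m t) = cpoly n c (of_nat m)"
      using Pn_cpoly_on_ray[OF p] by blast
    have "s + nmul m t \<in> H" for m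
      using H that nmul_in_closed_subgroup[OF H that(2)] by (auto simp: closed_subgroup_def)
    with c show ?thesis by (auto simp: restr_def cpoly_def)
  qed
  ultimately show ?thesis unfolding Pn_def by (simp add: restr_def)
qed

definition extend_Pn :: "nat \<Rightarrow> nat \<Rightarrow> ('g::ab_group_add \<Rightarrow> 'x::complex_vector) \<Rightarrow> 'g \<Rightarrow> 'x" where
  "extend_Pn n N q g = (\<Sum>j\<le>n. lagrange_basis n (\<lambda>j. of_nat (N * j)) 1 j *\<^sub>C q (nmul (N * j) g))"

lemma extend_Pn_cpoly_on_ray:
  assumes H: "closed_subgroup H" and N: "\<And>g. nmul N g \<in> H" and q: "q \<in> Pn n H"
  shows "\<exists>c. \<forall>m. extend_Pn n N q (s + nmul m t) = cpoly n c (of_nat m)"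
proof -
  have "\<forall>j. \<exists>c. \<forall>m. q (nmul j (nmul N s) + nmul m (nmul N t)) = cpoly n c (of_nat m)"
    using Pn_cpoly_on_ray[OF q nmul_in_closed_subgroup[OF H N] N] by metis
  then obtain C where C: "\<And>j m. q (nmul j (nmul N s) + nmul m (nmul N t)) = cpoly n (C j) (of_nat m)"
    by metis
  have "nmul (N * j) (s + nmul m t) = nmul j (nmul N s) + nmul (j * m) (nmul N t)" for j m
    by (simp add: nmul_add_right nmul_mult[symmetric] mult_ac)
  then have "q (nmul (N * j) (s + nmul m t)) = cpoly n (\<lambda>k. of_nat j ^ k *\<^sub>C C j k) (of_nat m)" for j m
    by (simp add: C cpoly_mult_arg[symmetric])
  then have "extend_Pn n N q (s + nmul m t) = cpoly n (\<lambda>k. \<Sum>j\<le>n.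
      lagrange_basis n (\<lambda>j. of_nat (N * j)) 1 j *\<^sub>C of_nat j ^ k *\<^sub>C C j k) (of_nat m)" for m
    unfolding extend_Pn_def by (simp only: sum_scaleC_cpoly)
  then show ?thesis by blast
qed

lemma extend_Pn_in_Pn:
  assumes top: "topological_ab_group TYPE('g::{topological_space,ab_group_add})"
    and lc: "locally_convex_tvs TYPE('x::{topological_space,complex_vector})"
    and H: "closed_subgroup H" and N: "\<And>g. nmul N g \<in> H" and q: "q \<in> (Pn n H :: ('g \<Rightarrow> 'x) set)"
  shows "extend_Pn n N q \<in> Pn n UNIV"
proof -
  have "continuous_on H q" using q by (simp add: Pn_def)
  moreover have "nmul (N * j) g \<in> H" for j g
    using N by (simp add: nmul_mult)
  ultimately have "continuous_on UNIV (\<lambda>g. q (nmul (N * j) g))" for j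
    by (intro continuous_on_compose2[OF _ continuous_on_nmul[OF top]]) auto
  then have "continuous_on UNIV (extend_Pn n N q)"
    unfolding extend_Pn_def
    by (intro continuous_on_sum_tvs[OF lc] continuous_on_scaleC_tvs[OF lc] finite_atMost)
  with extend_Pn_cpoly_on_ray[OF H N q] show ?thesis
    unfolding Pn_def cpoly_def by blast
qed

lemma restr_extend_Pn:
  assumes H: "closed_subgroup H" and "N > 0" and q: "q \<in> Pn n H"
  shows "restr H (extend_Pn n N q) = q"
proof
  fix g
  have "0 \<in> H" using H by (simp add: closed_subgroup_def)
  show "restr H (extend_Pn n N q) g = q g"
  proof (cases "g \<in> H")
    case True
    with Pn_eq_interpolation_multiples[OF q \<open>0 \<in> H\<close> True \<open>N > 0\<close>] show ?thesis
      by (simp add: restr_def extend_Pn_def)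
  next
    case False
    with q show ?thesis by (simp add: restr_def Pn_def)
  qed
qed

theorem lemma3p3:
  fixes H :: "'g::{t2_space, ab_group_add} set" and n :: nat
  assumes "topological_ab_group TYPE('g)"
      and "locally_compact_space_type TYPE('g)"
      and "locally_convex_tvs TYPE('x::{topological_space, complex_vector})"
      and "closed_subgroup H"
      and "quotient_torsion H"
  shows "inj_on (restr H) (Pn n UNIV :: ('g \<Rightarrow> 'x) set)
       \<and> (quotient_bounded_order H \<and> fin_dim_C (Pn n H :: ('g \<Rightarrow> complex) set)
           \<longrightarrow> bij_betw (restr H) (Pn n UNIV :: ('g \<Rightarrow> 'x) set) (Pn n H))"
proof (intro conjI impI)
  show inj: "inj_on (restr H) (Pn n UNIV :: ('g \<Rightarrow> 'x) set)"
    using inj_on_restr_Pn[OF assms(4,5)] .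
  assume "quotient_bounded_order H \<and> fin_dim_C (Pn n H :: ('g \<Rightarrow> complex) set)"
  then obtain N where N: "N > 0" "\<And>g. nmul N g \<in> H"
    using quotient_bounded_order_common_multiple[OF assms(4)] by blast
  have "Pn n H \<subseteq> restr H ` (Pn n UNIV :: ('g \<Rightarrow> 'x) set)"
  proof
    fix q :: "'g \<Rightarrow> 'x" assume "q \<in> Pn n H"
    then show "q \<in> restr H ` Pn n UNIV"
      using extend_Pn_in_Pn[OF assms(1,3,4) N(2)] restr_extend_Pn[OF assms(4) N(1)] by (metis image_eqI)
  qed
  with inj restr_Pn_UNIV[OF assms(4)] show "bij_betw (restr H) (Pn n UNIV :: ('g \<Rightarrow> 'x) set) (Pn n H)"
    unfolding bij_betw_def by blast
qed

end
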